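(* For any real numbers $t\ge1$ and $\varepsilon>0$, there exist an instance, a $t$-cohesive group $N^*$, and an allocation $A$ satisfying EJR-1 such that the average satisfaction of $N^*$ with respect to $A$ is at most $\frac{t-2+1/t}{2}+\varepsilon$.
   Context: Model: There is a set of agents $N=\{1,\dots,n\}$. The resource $R$ consists of a cake $C=[0,c]$ for a real $c\ge 0$ and a set of indivisible goods $G=\{g_1,\dots,g_m\}$ for an integer $m\ge 0$, with $\max(c,m)>0$. A piece of cake is a union of finitely many disjoint closed subintervals of $C$; its length $\ell(\cdot)$ is the sum of the lengths of its intervals. A bundle $R'=(C',G')$ consists of a piece of cake $C'\subseteq C$ and a set $G'\subseteq G$; its size is $s(R')=\ell(C')+|G'|$. Each agent $i$ approves a bundle $R_i=(C_i,G_i)$, and her utility for a bundle $R'$ is $u_i(R')=\ell(C_i\cap C')+|G_i\cap G'|$. A parameter $\alpha\in(0,c+m]$ is given; an allocation is a bundle $A$ with $s(A)\le\alpha$. For a real $t>0$, $N^*\subseteq N$ is $t$-cohesive if $|N^*|\ge t n/\alpha$ and $s(\bigcap_{i\in N^*}R_i)\ge t$. EJR-1: an allocation $A$ satisfies EJR-1 if for every real $t>0$ and every $t$-cohesive group $N^*$, some $j\in N^*$ has $u_j(A)>t-1$. The average satisfaction of a group $N'\subseteq N$ with respect to $A$ is $\frac1{|N'|}\sum_{i\in N'}u_i(A)$. *)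

theory Defs
  imports "HOL-Analysis.Analysis"
begin

(* Agents are N = {0..<n}; goods are G = {0..<m} (as naturals); the cake is [0,c].
   A bndl is a pair (piece of cake, set of goods). *)

type_synonym bndl = "real set \<times> nat set"

definition piece_of_cake :: "real \<Rightarrow> real set \<Rightarrow> bool" where
  "piece_of_cake c X \<longleftrightarrow> X \<subseteq> {0..c} \<and>
     (\<exists>I :: (real \<times> real) set. finite I \<and> (\<forall>(a,b)\<in>I. a \<le> b) \<and>
        pairwise (\<lambda>(a,b) (a',b'). {a..b} \<inter> {a'..b'} = {}) I \<and>
        X = (\<Union>(a,b)\<in>I. {a..b}))"

definition is_bundle :: "real \<Rightarrow> nat \<Rightarrow> bndl \<Rightarrow> bool" where
  "is_bundle c m B \<longleftrightarrow> piece_of_cake c (fst B) \<and> snd B \<subseteq> {0..<m}"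

(* length of a piece = Lebesgue measure (= sum of the lengths of its disjoint intervals) *)
definition len :: "real set \<Rightarrow> real" where
  "len X = measure lborel X"

definition bsize :: "bndl \<Rightarrow> real" where
  "bsize B = len (fst B) + real (card (snd B))"

definition utility :: "(nat \<Rightarrow> bndl) \<Rightarrow> nat \<Rightarrow> bndl \<Rightarrow> real" where
  "utility R i B = len (fst (R i) \<inter> fst B) + real (card (snd (R i) \<inter> snd B))"

definition valid_instance :: "nat \<Rightarrow> real \<Rightarrow> nat \<Rightarrow> (nat \<Rightarrow> bndl) \<Rightarrow> real \<Rightarrow> bool" where
  "valid_instance n c m R \<alpha> \<longleftrightarrow> n \<ge> 1 \<and> c \<ge> 0 \<and> max c (real m) > 0 \<and>
     (\<forall>i<n. is_bundle c m (R i)) \<and> 0 < \<alpha> \<and> \<alpha> \<le> c + real m"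

definition is_allocation :: "real \<Rightarrow> nat \<Rightarrow> real \<Rightarrow> bndl \<Rightarrow> bool" where
  "is_allocation c m \<alpha> A \<longleftrightarrow> is_bundle c m A \<and> bsize A \<le> \<alpha>"

definition common :: "(nat \<Rightarrow> bndl) \<Rightarrow> nat set \<Rightarrow> bndl" where
  "common R S = ((\<Inter>i\<in>S. fst (R i)), (\<Inter>i\<in>S. snd (R i)))"

definition cohesive :: "nat \<Rightarrow> (nat \<Rightarrow> bndl) \<Rightarrow> real \<Rightarrow> real \<Rightarrow> nat set \<Rightarrow> bool" where
  "cohesive n R \<alpha> t S \<longleftrightarrow> S \<subseteq> {0..<n} \<and> real (card S) \<ge> t * real n / \<alpha> \<and>
     bsize (common R S) \<ge> t"

definition EJR1 :: "nat \<Rightarrow> (nat \<Rightarrow> bndl) \<Rightarrow> real \<Rightarrow> bndl \<Rightarrow> bool" where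
  "EJR1 n R \<alpha> A \<longleftrightarrow> (\<forall>t>0. \<forall>S. cohesive n R \<alpha> t S \<longrightarrow> (\<exists>j\<in>S. utility R j A > t - 1))"

definition avg_sat :: "(nat \<Rightarrow> bndl) \<Rightarrow> nat set \<Rightarrow> bndl \<Rightarrow> real" where
  "avg_sat R S A = (\<Sum>i\<in>S. utility R i A) / real (card S)"

end

theory Submission
  imports Defs
begin

text \<open>Take \<open>k \<approx> t p\<close> agents and \<open>\<alpha> = k / p\<close>, so that a group of \<open>s\<close> agents is cohesive
  only for \<open>t' \<le> s / p\<close>. Agent \<open>i\<close> approves \<open>[0, \<alpha> + v\<^sub>i]\<close> and the allocation is
  \<open>[\<alpha>, 2\<alpha> - 1 + \<delta>]\<close>, so agent \<open>i\<close> gets utility \<open>v\<^sub>i = max 0 ((i + 1 - p) / p) + \<delta>\<close>. Any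
  cohesive group contains an agent whose index is at least its size minus one, which gives
  EJR-1; but the first \<open>p\<close> agents get only \<open>\<delta>\<close>, and the average of this staircase tends to
  \<open>(t - 1)\<^sup>2 / (2t)\<close>.\<close>

lemma piece_of_cake_interval:
  assumes "0 \<le> a" "a \<le> b" "b \<le> c"
  shows "piece_of_cake c {a..b}"
  unfolding piece_of_cake_def using assms by (auto intro!: exI[of _ "{(a, b)}"])

lemma len_interval: "a \<le> b \<Longrightarrow> len {a..b} = b - a"
  by (simp add: len_def)

lemma EJR1_if_utility_exceeds_rank:
  assumes "0 < \<alpha>" "0 < n"
    and utility_gt: "\<And>j. j < n \<Longrightarrow> utility R j A > (real j + 1) * \<alpha> / real n - 1"
  shows "EJR1 n R \<alpha> A"
  unfolding EJR1_def
proof (intro allI impI)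
  fix t :: real and S assume "t > 0" and "cohesive n R \<alpha> t S"
  then have S_sub: "S \<subseteq> {0..<n}" and card_S: "t * real n / \<alpha> \<le> real (card S)"
    unfolding cohesive_def by auto
  have "finite S" using S_sub finite_subset by blast
  moreover have "0 < t * real n / \<alpha>"
    using \<open>t > 0\<close> assms(1,2) by simp
  then have "S \<noteq> {}" using card_S by auto
  ultimately have "Max S \<in> S" and "card S \<le> Suc (Max S)"
    by (simp_all add: card_le_Suc_Max)
  then have "t * real n / \<alpha> \<le> real (Max S) + 1"
    using card_S by linarith
  then have "t \<le> (real (Max S) + 1) * \<alpha> / real n"
    using assms(1,2) by (simp add: field_simps)
  moreover have "Max S < n" using \<open>Max S \<in> S\<close> S_sub by auto
  ultimately show "\<exists>j\<in>S. utility R j A > t - 1"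
    using utility_gt \<open>Max S \<in> S\<close> by force
qed

lemma sum_hinge:
  fixes p d :: nat
  shows "(\<Sum>i<p + d. max 0 (real i + 1 - real p)) = real d * (real d + 1) / 2"
proof (induction d)
  case 0
  have "(\<Sum>i<p. max 0 (real i + 1 - real p)) = (\<Sum>i<p. (0::real))"
    by (rule sum.cong) auto
  then show ?case by simp
next
  case (Suc d)
  then show ?case by (simp add: field_simps)
qed

lemma staircase_average_le:
  fixes a t h :: real
  assumes "1 \<le> t" "t \<le> a" "a < t + h"
  shows "(a - 1) * (a - 1 + h) / (2 * a) \<le> (t - 2 + 1 / t) / 2 + h"
proof -
  have "a > 0" "h > 0" using assms by linarith+
  have "(a - 1)\<^sup>2 * t \<le> ((t - 1)\<^sup>2 + t * (a - t)) * a"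
    using assms(2) by (simp add: algebra_simps power2_eq_square)
  then have "(a - 1)\<^sup>2 / (2 * a) \<le> (t - 1)\<^sup>2 / (2 * t) + (a - t) / 2"
    using \<open>a > 0\<close> assms(1) by (simp add: field_simps)
  moreover have "(t - 1)\<^sup>2 / (2 * t) = (t - 2 + 1 / t) / 2"
    using assms(1) by (simp add: field_simps power2_eq_square)
  moreover have "(a - t) / 2 \<le> h / 2"
    using assms(3) by simp
  ultimately have square: "(a - 1)\<^sup>2 / (2 * a) \<le> (t - 2 + 1 / t) / 2 + h / 2"
    by linarith
  have "(a - 1) * h / (2 * a) \<le> h / 2"
    using \<open>a > 0\<close> \<open>h > 0\<close> by (simp add: field_simps)
  moreover have "(a - 1) * (a - 1 + h) / (2 * a) = (a - 1)\<^sup>2 / (2 * a) + (a - 1) * h / (2 * a)"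
    using \<open>a > 0\<close> by (simp add: field_simps power2_eq_square)
  ultimately show ?thesis using square by linarith
qed

locale staircase =
  fixes p k :: nat and \<delta> :: real
  assumes p_pos: "0 < p" and p_le_k: "p \<le> k" and \<delta>_pos: "0 < \<delta>" and \<delta>_le_1: "\<delta> \<le> 1"
begin

definition \<alpha> :: real where "\<alpha> = real k / real p"

definition gain :: "nat \<Rightarrow> real" where
  "gain i = max 0 (real i + 1 - real p) / real p + \<delta>"

definition approved :: "nat \<Rightarrow> bndl" where
  "approved i = ({0..\<alpha> + gain i}, {})"

definition allocated :: bndl where
  "allocated = ({\<alpha>..\<alpha> + gain (k - 1)}, {})"

lemma k_pos: "0 < k"
  using p_pos p_le_k by simp

lemma alpha_ge_1: "1 \<le> \<alpha>"
  using p_pos p_le_k by (simp add: \<alpha>_def)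

lemma gain_ge: "\<delta> \<le> gain i"
  using p_pos by (simp add: gain_def)

lemma gain_mono: "i \<le> j \<Longrightarrow> gain i \<le> gain j"
  unfolding gain_def by (intro add_right_mono divide_right_mono) auto

lemma gain_last: "gain (k - 1) = \<alpha> - 1 + \<delta>"
  using p_pos p_le_k k_pos by (simp add: gain_def \<alpha>_def field_simps)

lemma gain_le_last: "i < k \<Longrightarrow> gain i \<le> gain (k - 1)"
  by (rule gain_mono) linarith

lemma gain_le_alpha: "i < k \<Longrightarrow> gain i \<le> \<alpha>"
  using gain_le_last gain_last \<delta>_le_1 by fastforce

lemma utility_allocated: "i < k \<Longrightarrow> utility approved i allocated = gain i"
  using gain_le_last[of i] gain_ge[of i] alpha_ge_1 \<delta>_pos
  by (simp add: utility_def approved_def allocated_def len_interval)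

lemma approved_bundle: "i < k \<Longrightarrow> is_bundle (2 * \<alpha> + 1) 0 (approved i)"
  using gain_le_alpha[of i] gain_ge[of i] alpha_ge_1 \<delta>_pos
  by (simp add: is_bundle_def approved_def piece_of_cake_interval)

lemma valid_instance_approved: "valid_instance k (2 * \<alpha> + 1) 0 approved \<alpha>"
  using k_pos alpha_ge_1 approved_bundle by (simp add: valid_instance_def)

lemma is_allocation_allocated: "is_allocation (2 * \<alpha> + 1) 0 \<alpha> allocated"
  using gain_last alpha_ge_1 \<delta>_pos \<delta>_le_1
  by (simp add: is_allocation_def is_bundle_def bsize_def allocated_def
      piece_of_cake_interval len_interval)

lemma common_all_agents: "common approved {0..<k} = ({0..\<alpha> + gain 0}, {})"
proof -
  have "{0..\<alpha> + gain 0} \<subseteq> {0..\<alpha> + gain i}" for i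
    using gain_mono[of 0 i] by auto
  moreover have "0 \<in> {0..<k}" using k_pos by simp
  ultimately have "(\<Inter>i\<in>{0..<k}. {0..\<alpha> + gain i}) = {0..\<alpha> + gain 0}"
    by blast
  then show ?thesis using k_pos by (simp add: common_def approved_def)
qed

lemma cohesive_all_agents:
  assumes "t \<le> \<alpha>"
  shows "cohesive k approved \<alpha> t {0..<k}"
proof -
  have "t * real k \<le> real k * \<alpha>"
    using mult_right_mono[OF assms, of "real k"] by (simp add: mult.commute)
  then have "t * real k / \<alpha> \<le> real (card {0..<k})"
    using alpha_ge_1 by (simp add: pos_divide_le_eq)
  moreover have "t \<le> bsize (common approved {0..<k})"
    using assms gain_ge[of 0] \<delta>_pos alpha_ge_1 by (simp add: common_all_agents bsize_def len_interval)
  ultimately show ?thesis by (simp add: cohesive_def)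
qed

lemma EJR1_allocated: "EJR1 k approved \<alpha> allocated"
proof (rule EJR1_if_utility_exceeds_rank)
  show "0 < \<alpha>" "0 < k" using alpha_ge_1 k_pos by auto
  fix j assume "j < k"
  have "(real j + 1) * \<alpha> / real k - 1 = (real j + 1 - real p) / real p"
    using p_pos k_pos by (simp add: \<alpha>_def field_simps)
  also have "\<dots> \<le> max 0 (real j + 1 - real p) / real p"
    by (intro divide_right_mono) auto
  also have "\<dots> < gain j"
    using \<delta>_pos by (simp add: gain_def)
  finally show "utility approved j allocated > (real j + 1) * \<alpha> / real k - 1"
    using utility_allocated \<open>j < k\<close> by simp
qed

lemma sum_gain: "(\<Sum>i<k. gain i) = (real k - real p) * (real k - real p + 1) / (2 * real p) + real k * \<delta>"
proof -
  have hinge: "(\<Sum>i<k. max 0 (real i + 1 - real p)) = (real k - real p) * (real k - real p + 1) / 2"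
    using sum_hinge[of p "k - p"] p_le_k by simp
  have "(\<Sum>i<k. gain i) = (\<Sum>i<k. max 0 (real i + 1 - real p)) / real p + real k * \<delta>"
    by (simp add: gain_def sum.distrib flip: sum_divide_distrib)
  also have "\<dots> = (real k - real p) * (real k - real p + 1) / (2 * real p) + real k * \<delta>"
    unfolding hinge by simp
  finally show ?thesis .
qed

lemma avg_sat_all_agents:
  "avg_sat approved {0..<k} allocated = \<delta> + (\<alpha> - 1) * (\<alpha> - 1 + 1 / real p) / (2 * \<alpha>)"
proof -
  define d where "d = real k - real p"
  have "(\<Sum>i\<in>{0..<k}. utility approved i allocated) = (\<Sum>i<k. gain i)"
    using utility_allocated by (simp add: atLeast0LessThan)
  then have "avg_sat approved {0..<k} allocated = \<delta> + d * (d + 1) / (2 * real p * real k)"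
    using k_pos by (simp add: avg_sat_def sum_gain d_def add_divide_distrib)
  moreover have "\<alpha> - 1 = d / real p" and "\<alpha> - 1 + 1 / real p = (d + 1) / real p"
    using p_pos by (simp_all add: \<alpha>_def d_def diff_divide_distrib add_divide_distrib)
  ultimately show ?thesis
    using p_pos k_pos by (simp add: \<alpha>_def)
qed

end

theorem mainTheorem17:
  fixes t \<epsilon> :: real
  assumes "t \<ge> 1" and "\<epsilon> > 0"
  shows "\<exists>n c m R \<alpha> S A. valid_instance n c m R \<alpha> \<and> cohesive n R \<alpha> t S \<and>
           is_allocation c m \<alpha> A \<and> EJR1 n R \<alpha> A \<and>
           avg_sat R S A \<le> (t - 2 + 1 / t) / 2 + \<epsilon>"
proof -
  define p :: nat where "p = nat \<lceil>2 / \<epsilon>\<rceil> + 1"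
  define k :: nat where "k = nat \<lceil>t * real p\<rceil>"
  define \<delta> where "\<delta> = min 1 (\<epsilon> / 2)"
  have "0 < p" and "2 / \<epsilon> \<le> real p" unfolding p_def by linarith+
  then have p_large: "1 / real p \<le> \<epsilon> / 2" using assms(2) by (simp add: field_simps)
  have "real k = of_int \<lceil>t * real p\<rceil>" using assms(1) by (simp add: k_def)
  then have k_lower: "t * real p \<le> real k" and k_upper: "real k < t * real p + 1"
    by linarith+
  moreover have "real p \<le> t * real p" using mult_right_mono[OF assms(1), of "real p"] by simp
  ultimately have "p \<le> k" by simp
  interpret staircase p k \<delta>
    using \<open>0 < p\<close> \<open>p \<le> k\<close> assms(2) by unfold_locales (simp_all add: \<delta>_def)
  have "t \<le> \<alpha>" "\<alpha> < t + 1 / real p"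
    using k_lower k_upper p_pos by (simp_all add: \<alpha>_def field_simps)
  then have "(\<alpha> - 1) * (\<alpha> - 1 + 1 / real p) / (2 * \<alpha>) \<le> (t - 2 + 1 / t) / 2 + 1 / real p"
    by (intro staircase_average_le[OF assms(1)])
  moreover have "\<delta> \<le> \<epsilon> / 2" by (simp add: \<delta>_def)
  ultimately have "avg_sat approved {0..<k} allocated \<le> (t - 2 + 1 / t) / 2 + \<epsilon>"
    unfolding avg_sat_all_agents using p_large by linarith
  then show ?thesis
    using valid_instance_approved cohesive_all_agents[OF \<open>t \<le> \<alpha>\<close>] is_allocation_allocated EJR1_allocated
    by blast
qed

end
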